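(* Let $p>2$ be a prime and let $L$ be a Latin square of order $p$ with parity type $(k,m)$, and let $\mathfrak A(L)$ be its autotopy group. (i) If $k\neq0$ or $m\neq0$, then $p^2$ does not divide $|\mathfrak A(L)|$. (ii) If $k\neq0$ and $m\neq0$, then $p$ does not divide $|\mathfrak A(L)|$. (iii) If the parity type of $L$ is $(0,0)$ but $L$ is not isotopic to the Cayley table of $\mathbb Z_p$, then $p^2$ does not divide $|\mathfrak A(L)|$.
   Context: A Latin square of order $n$ is an $n\times n$ array with entries in $[n]$, each symbol once in each row and column. An isotopism $(\alpha,\beta,\gamma)\in S_n^3$ acts by $(\alpha,\beta,\gamma)(L)=L'$ with $L'(\alpha(r),\beta(c))=\gamma(L(r,c))$; two squares are isotopic if one is mapped to the other by an isotopism. The autotopy group $\mathfrak A(L)$ is $\{\Theta\in S_n^3:\Theta(L)=L\}$. Rows and columns are viewed as permutations: if symbol $i$ appears in the $j$th place of a row (column) $\sigma$, then $\sigma(i)=j$. The parity type of $L$ is $(k,m)$, $0\le k,m\le n/2$, if $k$ of its rows have one sign and the other $n-k$ rows the opposite sign, and $m$ of its columns have one sign and the other $n-m$ columns the opposite sign. *)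

theory Defs
  imports "HOL-Combinatorics.Permutations" "HOL-Computational_Algebra.Primes"
begin

definition latin_square :: "nat \<Rightarrow> (nat \<Rightarrow> nat \<Rightarrow> nat) \<Rightarrow> bool" where
  "latin_square n L \<longleftrightarrow>
     (\<forall>r<n. \<forall>c<n. L r c < n) \<and>
     (\<forall>r<n. inj_on (L r) {..<n}) \<and>
     (\<forall>c<n. inj_on (\<lambda>r. L r c) {..<n})"

definition row_perm :: "nat \<Rightarrow> (nat \<Rightarrow> nat \<Rightarrow> nat) \<Rightarrow> nat \<Rightarrow> nat \<Rightarrow> nat" where
  "row_perm n L r = (\<lambda>i. if i < n then (THE j. j < n \<and> L r j = i) else i)"

definition col_perm :: "nat \<Rightarrow> (nat \<Rightarrow> nat \<Rightarrow> nat) \<Rightarrow> nat \<Rightarrow> nat \<Rightarrow> nat" where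
  "col_perm n L c = (\<lambda>i. if i < n then (THE j. j < n \<and> L j c = i) else i)"

definition parity_type :: "nat \<Rightarrow> (nat \<Rightarrow> nat \<Rightarrow> nat) \<Rightarrow> nat \<times> nat" where
  "parity_type n L =
     (min (card {r. r < n \<and> sign (row_perm n L r) = 1})
          (card {r. r < n \<and> sign (row_perm n L r) = -1}),
      min (card {c. c < n \<and> sign (col_perm n L c) = 1})
          (card {c. c < n \<and> sign (col_perm n L c) = -1}))"

definition isotopism_maps :: "nat \<Rightarrow> (nat \<Rightarrow> nat) \<times> (nat \<Rightarrow> nat) \<times> (nat \<Rightarrow> nat)
     \<Rightarrow> (nat \<Rightarrow> nat \<Rightarrow> nat) \<Rightarrow> (nat \<Rightarrow> nat \<Rightarrow> nat) \<Rightarrow> bool" where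
  "isotopism_maps n \<Theta> L L' \<longleftrightarrow>
     (case \<Theta> of (\<alpha>, \<beta>, \<gamma>) \<Rightarrow>
        \<alpha> permutes {..<n} \<and> \<beta> permutes {..<n} \<and> \<gamma> permutes {..<n} \<and>
        (\<forall>r<n. \<forall>c<n. L' (\<alpha> r) (\<beta> c) = \<gamma> (L r c)))"

definition isotopic :: "nat \<Rightarrow> (nat \<Rightarrow> nat \<Rightarrow> nat) \<Rightarrow> (nat \<Rightarrow> nat \<Rightarrow> nat) \<Rightarrow> bool" where
  "isotopic n L L' \<longleftrightarrow> (\<exists>\<Theta>. isotopism_maps n \<Theta> L L')"

definition autotopy_group :: "nat \<Rightarrow> (nat \<Rightarrow> nat \<Rightarrow> nat)
     \<Rightarrow> ((nat \<Rightarrow> nat) \<times> (nat \<Rightarrow> nat) \<times> (nat \<Rightarrow> nat)) set" where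
  "autotopy_group n L = {\<Theta>. isotopism_maps n \<Theta> L L}"

definition cayley_Zn :: "nat \<Rightarrow> nat \<Rightarrow> nat \<Rightarrow> nat" where
  "cayley_Zn n = (\<lambda>r c. (r + c) mod n)"

end

theory Submission
  imports Defs "HOL-Combinatorics.Cycles" "HOL-Algebra.Sylow" "HOL-Algebra.Multiplicative_Group"
begin

text \<open>
  If \<open>(\<alpha>, \<beta>, \<gamma>)\<close> is an autotopism of order \<open>p\<close>, then \<open>\<beta>\<close> and \<open>\<gamma>\<close> are even (their order is
  odd), and the relation \<open>row(\<alpha> r) \<circ> \<gamma> = \<beta> \<circ> row(r)\<close> shows that \<open>\<alpha>\<close> preserves the signs of
  the rows. A nontrivial permutation of order \<open>p\<close> on \<open>p\<close> points is a \<open>p\<close>-cycle, so \<open>\<alpha> \<noteq> 1\<close>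
  forces all rows to have the same sign, i.e. \<open>k = 0\<close>; likewise \<open>\<beta> \<noteq> 1\<close> forces \<open>m = 0\<close>,
  while \<open>\<alpha> = \<beta> = 1\<close> forces \<open>\<gamma> = 1\<close>. Cauchy's theorem then gives (ii).

  If \<open>p\<^sup>2\<close> divides the order of the autotopy group, then, as \<open>p\<^sup>2\<close> does not divide \<open>p!\<close>, the
  kernel of \<open>(\<alpha>, \<beta>, \<gamma>) \<mapsto> \<alpha>\<close> has order divisible by \<open>p\<close> and contains an autotopism
  \<open>(1, \<beta>, \<gamma>)\<close> of order \<open>p\<close>. Then \<open>m = 0\<close>, and since \<open>\<beta>\<close> and \<open>\<gamma>\<close> are \<open>p\<close>-cycles, every row is
  a translate of every other one, so \<open>L\<close> is isotopic to the Cayley table of \<open>\<int>\<^sub>p\<close>. Transposing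
  \<open>L\<close> also gives \<open>k = 0\<close>, which proves (i) and (iii).
\<close>

lemma permutes_lessThan_less: "f permutes {..<n} \<Longrightarrow> x < n \<Longrightarrow> f x < n"
  using permutes_in_image[of f "{..<n}" x] by simp

lemma sign_funpow: "permutation f \<Longrightarrow> sign (f ^^ k) = sign f ^ k"
  by (induction k) (simp_all add: sign_compose permutation_funpow)

lemma sign_eq_1_if_funpow_odd_eq_id:
  assumes "permutation f" "f ^^ k = id" "odd k"
  shows "sign f = 1"
proof -
  have "sign f ^ k = 1" using sign_funpow[OF assms(1), of k] assms(2) by simp
  then show ?thesis using assms(3) by (cases "evenperm f") (simp_all add: sign_def)
qed

lemma bij_betw_funpow_prime_order:
  assumes perm: "f permutes S" and card: "card S = p" and p: "prime p"
    and order: "f ^^ p = id" and x: "x \<in> S" "f x \<noteq> x"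
  shows "bij_betw (\<lambda>i. (f ^^ i) x) {..<p} S"
proof -
  have fin: "finite S" using card p by (metis card.infinite not_prime_0)
  have "permutation f" using perm fin by (metis permutation_permutes)
  moreover have "least_power f x = p"
  proof -
    have "least_power f x dvd p" using least_power_minimal[of p f x] order by simp
    moreover have "least_power f x \<noteq> 1"
      using least_power_gt_one[OF \<open>permutation f\<close> x(2)] by simp
    ultimately show ?thesis using p by (auto simp: prime_nat_iff)
  qed
  ultimately have "inj_on (\<lambda>i. (f ^^ i) x) {..<p}"
    using cycle_of_permutation[of f x] by (simp add: distinct_map atLeast_upt)
  moreover have "(\<lambda>i. (f ^^ i) x) ` {..<p} \<subseteq> S"
    using permutes_in_funpow_image[OF perm x(1)] by auto
  ultimately show ?thesis
    using card fin by (simp add: bij_betw_def card_image card_subset_eq)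
qed

lemma invariant_const_if_prime_order:
  assumes perm: "f permutes S" and card: "card S = p" and p: "prime p"
    and order: "f ^^ p = id" and nontriv: "f \<noteq> id"
    and inv: "\<And>x. x \<in> S \<Longrightarrow> g (f x) = g x" and xy: "x \<in> S" "y \<in> S"
  shows "g x = g y"
proof -
  obtain x0 where x0: "f x0 \<noteq> x0" using nontriv by (metis eq_id_iff)
  then have "x0 \<in> S" using perm by (meson permutes_not_in)
  have const: "g ((f ^^ i) x0) = g x0" for i
  proof (induction i)
    case (Suc i)
    then show ?case
      using inv permutes_in_funpow_image[OF perm \<open>x0 \<in> S\<close>, of i] by simp
  qed simp
  have "S = (\<lambda>i. (f ^^ i) x0) ` {..<p}"
    using bij_betw_funpow_prime_order[OF perm card p order \<open>x0 \<in> S\<close> x0]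
    by (simp add: bij_betw_def)
  then show ?thesis using xy const by auto
qed

lemma nat_pow_carrier_update: "x [^]\<^bsub>G\<lparr>carrier := A\<rparr>\<^esub> (n::nat) = x [^]\<^bsub>G\<^esub> n"
  by (simp add: nat_pow_def)

lemma (in group) subgroup_has_elem_pow_prime_eq_one:
  assumes fin: "finite (carrier G)" and K: "subgroup K G" and p: "prime p" and dvd: "p dvd card K"
  shows "\<exists>x\<in>K. x \<noteq> \<one> \<and> x [^] p = \<one>"
proof -
  interpret K: group "G\<lparr>carrier := K\<rparr>" using subgroup_imp_group[OF K] .
  have finK: "finite K" using fin K subgroup.subset finite_subset by blast
  obtain m where "order (G\<lparr>carrier := K\<rparr>) = p ^ 1 * m" using dvd by (auto simp: order_def)
  then obtain H where H: "subgroup H (G\<lparr>carrier := K\<rparr>)" "card H = p"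
    using sylow_thm[OF p K.is_group _] finK by fastforce
  have "\<not> H \<subseteq> {\<one>}"
  proof
    assume "H \<subseteq> {\<one>}"
    then have "card H \<le> 1" using card_mono[of "{\<one>}" H] by simp
    then show False using H(2) prime_gt_1_nat[OF p] by simp
  qed
  then obtain x where x: "x \<in> H" "x \<noteq> \<one>" by blast
  interpret H: group "G\<lparr>carrier := K\<rparr>\<lparr>carrier := H\<rparr>" using K.subgroup_imp_group[OF H(1)] .
  have "H \<subseteq> K" using subgroup.subset[OF H(1)] by simp
  then have "x [^]\<^bsub>G\<lparr>carrier := K\<rparr>\<lparr>carrier := H\<rparr>\<^esub> p = \<one>"
    using H.pow_order_eq_1[of x] H(2) finite_subset[OF _ finK] x(1) by (simp add: order_def)
  then have "x [^] p = \<one>" by (simp only: nat_pow_carrier_update)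
  then show ?thesis using x \<open>H \<subseteq> K\<close> by blast
qed

lemma (in group_hom) card_image_mult_card_kernel:
  "card (h ` carrier G) * card (kernel G H h) = order G"
proof -
  let ?I = "H\<lparr>carrier := h ` carrier G\<rparr>"
  have "group ?I" by (rule H.subgroup_imp_group[OF img_is_subgroup])
  moreover have "h \<in> hom G ?I" by (auto simp: hom_def)
  ultimately interpret hI: group_hom G ?I h
    by (simp add: group_hom_def group_hom_axioms_def G.group_axioms)
  have "kernel G ?I h = kernel G H h" by (simp add: kernel_def)
  moreover have "G Mod kernel G ?I h \<cong> ?I" by (rule hI.FactGroup_iso) simp
  ultimately have "card (carrier (G Mod kernel G H h)) = card (h ` carrier G)"
    using iso_same_card by fastforce
  then have "card (rcosets (kernel G H h)) = card (h ` carrier G)"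
    by (simp add: FactGroup_def)
  then show ?thesis using G.lagrange[OF subgroup_kernel] by simp
qed

lemma (in group_hom) kernel_has_elem_pow_prime_eq_one:
  assumes fin: "finite (carrier G)" and p: "prime p"
    and dvd: "p^2 dvd order G" and not_dvd: "\<not> p^2 dvd order H"
  shows "\<exists>x\<in>carrier G. h x = \<one>\<^bsub>H\<^esub> \<and> x \<noteq> \<one> \<and> x [^] p = \<one>"
proof -
  have "card (h ` carrier G) dvd order H"
    using H.lagrange[OF img_is_subgroup] by (metis dvd_triv_right)
  then have "\<not> p^2 dvd card (h ` carrier G)" using not_dvd dvd_trans by blast
  have "p dvd card (kernel G H h)"
  proof (rule ccontr)
    assume "\<not> p dvd card (kernel G H h)"
    then have "coprime (p^2) (card (kernel G H h))" using p by (simp add: prime_imp_coprime)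
    then have "p^2 dvd card (h ` carrier G)"
      using dvd by (simp add: card_image_mult_card_kernel[symmetric] coprime_dvd_mult_left_iff)
    with \<open>\<not> p^2 dvd card (h ` carrier G)\<close> show False ..
  qed
  then obtain x where "x \<in> kernel G H h" "x \<noteq> \<one>" "x [^] p = \<one>"
    using G.subgroup_has_elem_pow_prime_eq_one[OF fin subgroup_kernel p] by blast
  then show ?thesis by (auto simp: kernel_def)
qed

lemma prime_square_not_dvd_fact:
  assumes p: "prime (p::nat)"
  shows "\<not> p^2 dvd fact p"
proof
  have p0: "0 < p" using p by (rule prime_gt_0_nat)
  assume "p^2 dvd fact p"
  then have "p * p dvd p * fact (p - 1)"
    using fact_reduce[OF p0, where 'a = nat] by (simp add: power2_eq_square)
  then have "p dvd fact (p - 1)" using p0 by simp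
  then show False using prime_dvd_fact_iff[OF p] p0 by simp
qed

definition perm_group :: "'a set \<Rightarrow> ('a \<Rightarrow> 'a) monoid" where
  "perm_group S = \<lparr>carrier = {f. f permutes S}, mult = (\<circ>), one = id\<rparr>"

lemma group_perm_group: "group (perm_group S)"
  by (rule groupI)
     (auto simp: perm_group_def permutes_compose permutes_id comp_assoc
       intro!: exI[where x = "Hilbert_Choice.inv _"] permutes_inv permutes_inv_o)

lemma order_perm_group: "finite S \<Longrightarrow> order (perm_group S) = fact (card S)"
  by (simp add: order_def perm_group_def card_permutations)

definition transposed :: "(nat \<Rightarrow> nat \<Rightarrow> nat) \<Rightarrow> nat \<Rightarrow> nat \<Rightarrow> nat" where
  "transposed L = (\<lambda>r c. L c r)"

lemma transposed_transposed [simp]: "transposed (transposed L) = L"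
  by (simp add: transposed_def)

lemma latin_square_transposed: "latin_square n L \<Longrightarrow> latin_square n (transposed L)"
  by (simp add: latin_square_def transposed_def)

lemma col_perm_eq_row_perm_transposed: "col_perm n L = row_perm n (transposed L)"
  by (simp add: col_perm_def row_perm_def transposed_def fun_eq_iff)

lemma parity_type_transposed: "parity_type n (transposed L) = prod.swap (parity_type n L)"
  using col_perm_eq_row_perm_transposed[of n L] col_perm_eq_row_perm_transposed[of n "transposed L"]
  by (simp add: parity_type_def)

lemma latin_square_row_bij:
  assumes "latin_square n L" "r < n"
  shows "bij_betw (L r) {..<n} {..<n}"
proof -
  have "inj_on (L r) {..<n}" "L r ` {..<n} \<subseteq> {..<n}"
    using assms by (auto simp: latin_square_def)
  then show ?thesis by (simp add: bij_betw_def endo_inj_surj)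
qed

lemma row_perm_eq_restrict_id: "row_perm n L r = restrict_id (the_inv_into {..<n} (L r)) {..<n}"
  by (auto simp: row_perm_def restrict_id_def the_inv_into_def)

lemma row_perm_permutes:
  assumes "latin_square n L" "r < n"
  shows "row_perm n L r permutes {..<n}"
  unfolding row_perm_eq_restrict_id
  by (intro permutes_restrict_id bij_betw_the_inv_into latin_square_row_bij assms)

lemma row_perm_apply:
  assumes "latin_square n L" "r < n" "c < n"
  shows "row_perm n L r (L r c) = c"
proof -
  have "L r c \<in> {..<n}" using assms by (auto simp: latin_square_def)
  then show ?thesis
    using latin_square_row_bij[OF assms(1,2)] assms(3)
    by (simp add: row_perm_eq_restrict_id bij_betw_def the_inv_into_f_f)
qed

lemma apply_row_perm:
  assumes "latin_square n L" "r < n" "i < n"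
  shows "L r (row_perm n L r i) = i"
  using latin_square_row_bij[OF assms(1,2)] assms(3)
  by (auto simp: row_perm_eq_restrict_id f_the_inv_into_f_bij_betw)

lemma isotopism_maps_comp:
  assumes "isotopism_maps n (a, b, c) L L'" "isotopism_maps n (a', b', c') L' L''"
  shows "isotopism_maps n (a' \<circ> a, b' \<circ> b, c' \<circ> c) L L''"
proof -
  have "a r < n" "b s < n" if "r < n" "s < n" for r s
    using assms(1) that by (auto simp: isotopism_maps_def permutes_lessThan_less)
  then show ?thesis
    using assms by (auto simp: isotopism_maps_def permutes_compose)
qed

lemma isotopism_maps_inv:
  assumes "isotopism_maps n (a, b, c) L L'"
  shows "isotopism_maps n (Hilbert_Choice.inv a, Hilbert_Choice.inv b, Hilbert_Choice.inv c) L' L"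
proof -
  have perm: "a permutes {..<n}" "b permutes {..<n}" "c permutes {..<n}"
    and eq: "\<And>r s. r < n \<Longrightarrow> s < n \<Longrightarrow> L' (a r) (b s) = c (L r s)"
    using assms by (auto simp: isotopism_maps_def)
  have "L (Hilbert_Choice.inv a r) (Hilbert_Choice.inv b s) = Hilbert_Choice.inv c (L' r s)"
    if "r < n" "s < n" for r s
  proof -
    have "Hilbert_Choice.inv a r < n" "Hilbert_Choice.inv b s < n"
      using that perm by (simp_all add: permutes_lessThan_less permutes_inv)
    from eq[OF this] have "L' r s = c (L (Hilbert_Choice.inv a r) (Hilbert_Choice.inv b s))"
      using perm by (simp add: permutes_inverses)
    then show ?thesis using perm(3) by (simp add: permutes_inverses)
  qed
  then show ?thesis using perm by (simp add: isotopism_maps_def permutes_inv)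
qed

lemma isotopic_sym: "isotopic n L L' \<Longrightarrow> isotopic n L' L"
  unfolding isotopic_def by (metis isotopism_maps_inv prod_cases3)

definition autotopy_grp ::
    "nat \<Rightarrow> (nat \<Rightarrow> nat \<Rightarrow> nat) \<Rightarrow> ((nat \<Rightarrow> nat) \<times> (nat \<Rightarrow> nat) \<times> (nat \<Rightarrow> nat)) monoid" where
  "autotopy_grp n L =
     \<lparr>carrier = autotopy_group n L,
      mult = (\<lambda>(a, b, c) (a', b', c'). (a \<circ> a', b \<circ> b', c \<circ> c')),
      one = (id, id, id)\<rparr>"

lemma group_autotopy_grp: "group (autotopy_grp n L)"
proof (rule groupI)
  fix x y assume "x \<in> carrier (autotopy_grp n L)" "y \<in> carrier (autotopy_grp n L)"
  then show "x \<otimes>\<^bsub>autotopy_grp n L\<^esub> y \<in> carrier (autotopy_grp n L)"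
    by (cases x, cases y) (simp add: autotopy_grp_def autotopy_group_def isotopism_maps_comp)
next
  show "\<one>\<^bsub>autotopy_grp n L\<^esub> \<in> carrier (autotopy_grp n L)"
    by (simp add: autotopy_grp_def autotopy_group_def isotopism_maps_def permutes_id)
next
  fix x y z
  show "x \<otimes>\<^bsub>autotopy_grp n L\<^esub> y \<otimes>\<^bsub>autotopy_grp n L\<^esub> z =
        x \<otimes>\<^bsub>autotopy_grp n L\<^esub> (y \<otimes>\<^bsub>autotopy_grp n L\<^esub> z)"
    by (cases x, cases y, cases z) (simp add: autotopy_grp_def comp_assoc)
next
  fix x show "\<one>\<^bsub>autotopy_grp n L\<^esub> \<otimes>\<^bsub>autotopy_grp n L\<^esub> x = x"
    by (cases x) (simp add: autotopy_grp_def)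
next
  fix x assume x: "x \<in> carrier (autotopy_grp n L)"
  obtain a b c where abc: "x = (a, b, c)" by (cases x)
  have iso: "isotopism_maps n (a, b, c) L L" using x abc by (simp add: autotopy_grp_def autotopy_group_def)
  then have "a permutes {..<n}" "b permutes {..<n}" "c permutes {..<n}"
    by (auto simp: isotopism_maps_def)
  then show "\<exists>y\<in>carrier (autotopy_grp n L). y \<otimes>\<^bsub>autotopy_grp n L\<^esub> x = \<one>\<^bsub>autotopy_grp n L\<^esub>"
    using isotopism_maps_inv[OF iso] abc
    by (intro bexI[of _ "(Hilbert_Choice.inv a, Hilbert_Choice.inv b, Hilbert_Choice.inv c)"])
       (simp_all add: autotopy_grp_def autotopy_group_def permutes_inv_o)
qed

lemma finite_autotopy_group: "finite (autotopy_group n L)"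
proof (rule finite_subset)
  show "autotopy_group n L \<subseteq> {f. f permutes {..<n}} \<times> {f. f permutes {..<n}} \<times> {f. f permutes {..<n}}"
    by (auto simp: autotopy_group_def isotopism_maps_def)
qed (simp add: finite_permutations)

lemma autotopy_grp_pow:
  "(a, b, c) [^]\<^bsub>autotopy_grp n L\<^esub> (k::nat) = (a ^^ k, b ^^ k, c ^^ k)"
  by (induction k) (simp_all add: autotopy_grp_def funpow_Suc_right comp_def id_def del: funpow.simps)

lemma autotopy_group_transposed:
  "(a, b, c) \<in> autotopy_group n (transposed L) \<longleftrightarrow> (b, a, c) \<in> autotopy_group n L"
  by (auto simp: autotopy_group_def isotopism_maps_def transposed_def)

lemma card_autotopy_group_transposed:
  "card (autotopy_group n (transposed L)) = card (autotopy_group n L)"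
proof -
  let ?swap = "\<lambda>(a, b, c). (b, a, c)"
  have "bij_betw ?swap (autotopy_group n (transposed L)) (autotopy_group n L)"
    by (rule bij_betwI[where g = ?swap]) (auto simp: autotopy_group_transposed)
  then show ?thesis by (rule bij_betw_same_card)
qed

lemma group_hom_row_component: "group_hom (autotopy_grp n L) (perm_group {..<n}) fst"
proof -
  have "fst \<in> hom (autotopy_grp n L) (perm_group {..<n})"
    by (auto simp: hom_def autotopy_grp_def perm_group_def autotopy_group_def isotopism_maps_def)
  then show ?thesis
    by (simp add: group_hom_def group_hom_axioms_def group_autotopy_grp group_perm_group)
qed

lemma row_perm_autotopism:
  assumes lat: "latin_square n L" and r: "r < n" and aut: "(a, b, c) \<in> autotopy_group n L"
  shows "row_perm n L (a r) \<circ> c = b \<circ> row_perm n L r"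
proof
  fix i
  have perm: "a permutes {..<n}" "b permutes {..<n}" "c permutes {..<n}"
    and eq: "\<And>r s. r < n \<Longrightarrow> s < n \<Longrightarrow> L (a r) (b s) = c (L r s)"
    using aut by (auto simp: autotopy_group_def isotopism_maps_def)
  have ar: "a r < n" using perm(1) r by (rule permutes_lessThan_less)
  show "(row_perm n L (a r) \<circ> c) i = (b \<circ> row_perm n L r) i"
  proof (cases "i < n")
    case True
    define j where "j = row_perm n L r i"
    have j: "j < n" "L r j = i"
      using row_perm_permutes[OF lat r] True apply_row_perm[OF lat r True]
      by (auto simp: j_def permutes_lessThan_less)
    have "b j < n" using perm(2) j(1) by (rule permutes_lessThan_less)
    moreover have "c i = L (a r) (b j)" using eq[OF r j(1)] j(2) by simp
    ultimately show ?thesis using row_perm_apply[OF lat ar] by (simp add: j_def)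
  next
    case False
    then show ?thesis
      using perm row_perm_permutes[OF lat r] row_perm_permutes[OF lat ar] by (simp add: permutes_not_in)
  qed
qed

lemma sign_row_perm_autotopism:
  assumes lat: "latin_square n L" and r: "r < n" and aut: "(a, b, c) \<in> autotopy_group n L"
    and sign: "sign b = 1" "sign c = 1"
  shows "sign (row_perm n L (a r)) = sign (row_perm n L r)"
proof -
  have perm: "a permutes {..<n}" "b permutes {..<n}" "c permutes {..<n}"
    using aut by (auto simp: autotopy_group_def isotopism_maps_def)
  then have "a r < n" using r by (simp add: permutes_lessThan_less)
  then have "permutation (row_perm n L (a r))" "permutation (row_perm n L r)"
    "permutation b" "permutation c"
    using row_perm_permutes[OF lat] r perm by (auto intro: permutation_permutes[THEN iffD2])
  then show ?thesis
    using arg_cong[OF row_perm_autotopism[OF lat r aut], of sign] sign by (simp add: sign_compose)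
qed

lemma fst_parity_type_eq_0_if_rows_same_sign:
  assumes "\<And>r r'. r < n \<Longrightarrow> r' < n \<Longrightarrow> sign (row_perm n L r) = sign (row_perm n L r')"
  shows "fst (parity_type n L) = 0"
proof -
  obtain s :: int where s: "\<And>r. r < n \<Longrightarrow> sign (row_perm n L r) = s"
    using assms by (metis less_nat_zero_code not_gr_zero)
  have "{r. r < n \<and> sign (row_perm n L r) = 1} = {} \<or> {r. r < n \<and> sign (row_perm n L r) = -1} = {}"
    using s by (cases "s = 1") auto
  then show ?thesis unfolding parity_type_def by (metis card.empty fst_conv min_0L min_0R)
qed

lemma fst_parity_type_eq_0_if_autotopism:
  assumes lat: "latin_square p L" and p: "prime p" "odd p"
    and aut: "(a, b, c) \<in> autotopy_group p L"
    and order: "a ^^ p = id" "b ^^ p = id" "c ^^ p = id" and a: "a \<noteq> id"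
  shows "fst (parity_type p L) = 0"
proof -
  have perm: "a permutes {..<p}" "b permutes {..<p}" "c permutes {..<p}"
    using aut by (auto simp: autotopy_group_def isotopism_maps_def)
  have "permutation b" "permutation c"
    using perm by (auto simp: permutation_permutes)
  then have "sign b = 1" "sign c = 1"
    using order(2,3) p(2) by (simp_all add: sign_eq_1_if_funpow_odd_eq_id)
  then have "\<And>r. r \<in> {..<p} \<Longrightarrow> sign (row_perm p L (a r)) = sign (row_perm p L r)"
    using sign_row_perm_autotopism[OF lat _ aut] by simp
  note const = invariant_const_if_prime_order[where g = "\<lambda>r. sign (row_perm p L r)", OF perm(1)
      card_lessThan p(1) order(1) a this]
  show ?thesis by (rule fst_parity_type_eq_0_if_rows_same_sign, rule const) simp_all
qed

lemma snd_parity_type_eq_0_if_autotopism: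
  assumes lat: "latin_square p L" and p: "prime p" "odd p"
    and aut: "(a, b, c) \<in> autotopy_group p L"
    and order: "a ^^ p = id" "b ^^ p = id" "c ^^ p = id" and b: "b \<noteq> id"
  shows "snd (parity_type p L) = 0"
proof -
  have "(b, a, c) \<in> autotopy_group p (transposed L)"
    using aut by (simp add: autotopy_group_transposed)
  from fst_parity_type_eq_0_if_autotopism[OF latin_square_transposed[OF lat] p this order(2,1,3) b]
  show ?thesis by (simp add: parity_type_transposed)
qed

lemma col_perm_permutes: "latin_square n L \<Longrightarrow> c < n \<Longrightarrow> col_perm n L c permutes {..<n}"
  by (simp add: col_perm_eq_row_perm_transposed latin_square_transposed row_perm_permutes)

lemma apply_col_perm: "latin_square n L \<Longrightarrow> c < n \<Longrightarrow> i < n \<Longrightarrow> L (col_perm n L c i) c = i"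
  using apply_row_perm[OF latin_square_transposed]
  by (simp add: col_perm_eq_row_perm_transposed transposed_def)

lemma autotopism_entry_funpow:
  assumes aut: "(id, b, c) \<in> autotopy_group n L" and r: "r < n" and s: "s < n"
  shows "L r ((b ^^ j) s) = (c ^^ j) (L r s)"
proof (induction j)
  case (Suc j)
  have "b permutes {..<n}" and eq: "\<And>r s. r < n \<Longrightarrow> s < n \<Longrightarrow> L r (b s) = c (L r s)"
    using aut by (auto simp: autotopy_group_def isotopism_maps_def)
  then have "(b ^^ j) s < n" using permutes_in_funpow_image[of b "{..<n}" s j] s by simp
  then show ?case using Suc eq[OF r] by simp
qed simp

lemma isotopic_cayley_Zn_if_autotopism:
  assumes lat: "latin_square p L" and p: "prime p"
    and aut: "(id, b, c) \<in> autotopy_group p L" and order: "b ^^ p = id" "c ^^ p = id"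
    and b: "b \<noteq> id"
  shows "isotopic p L (cayley_Zn p)"
proof -
  have perm: "b permutes {..<p}" "c permutes {..<p}"
    using aut by (auto simp: autotopy_group_def isotopism_maps_def)
  have p0: "0 < p" using p by (rule prime_gt_0_nat)
  obtain s0 where s0: "b s0 \<noteq> s0" using b by (metis eq_id_iff)
  then have "s0 < p" using perm(1) by (meson lessThan_iff permutes_not_in)
  define e0 where "e0 = L 0 s0"
  have "e0 < p" using lat p0 \<open>s0 < p\<close> by (simp add: e0_def latin_square_def)
  have "c e0 = L 0 (b s0)"
    using autotopism_entry_funpow[OF aut p0 \<open>s0 < p\<close>, of 1] by (simp add: e0_def)
  moreover have "b s0 < p" using perm(1) \<open>s0 < p\<close> by (rule permutes_lessThan_less)
  ultimately have "c e0 \<noteq> e0"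
    using s0 \<open>s0 < p\<close> lat p0 by (auto simp: e0_def latin_square_def dest: inj_onD)
  text \<open>Number the columns by \<open>j \<mapsto> b^j s0\<close> and the symbols by \<open>i \<mapsto> c^i e0\<close>; the row whose
    entry in column \<open>s0\<close> is \<open>c^i e0\<close> then carries \<open>c^(i+j) e0\<close> in column \<open>b^j s0\<close>.\<close>
  define B where "B = restrict_id (\<lambda>j. (b ^^ j) s0) {..<p}"
  define C where "C = restrict_id (\<lambda>i. (c ^^ i) e0) {..<p}"
  have B: "B permutes {..<p}"
    unfolding B_def using bij_betw_funpow_prime_order[OF perm(1) _ p order(1)] s0 \<open>s0 < p\<close>
    by (intro permutes_restrict_id) simp
  have C: "C permutes {..<p}"
    unfolding C_def using bij_betw_funpow_prime_order[OF perm(2) _ p order(2)] \<open>c e0 \<noteq> e0\<close> \<open>e0 < p\<close>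
    by (intro permutes_restrict_id) simp
  have "L (col_perm p L s0 (C i)) (B j) = C ((i + j) mod p)" if "i < p" "j < p" for i j
  proof -
    let ?r = "col_perm p L s0 (C i)"
    have "C i < p" using C \<open>i < p\<close> by (rule permutes_lessThan_less)
    then have r: "?r < p" "L ?r s0 = (c ^^ i) e0"
      using col_perm_permutes[OF lat \<open>s0 < p\<close>] apply_col_perm[OF lat \<open>s0 < p\<close>] that
      by (simp_all add: permutes_lessThan_less C_def)
    have "L ?r (B j) = (c ^^ (j + i)) e0"
      using autotopism_entry_funpow[OF aut r(1) \<open>s0 < p\<close>, of j] r(2) that
      by (simp add: B_def funpow_add)
    also have "\<dots> = (c ^^ ((i + j) mod p)) e0"
      using funpow_mod_eq[where f = c and n = p and x = e0 and m = "j + i"] order(2)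
      by (simp add: add.commute)
    finally show ?thesis using p0 by (simp add: C_def)
  qed
  then have "isotopism_maps p (col_perm p L s0 \<circ> C, B, C) (cayley_Zn p) L"
    using B C col_perm_permutes[OF lat \<open>s0 < p\<close>]
    by (simp add: isotopism_maps_def cayley_Zn_def permutes_compose)
  then have "isotopic p (cayley_Zn p) L" unfolding isotopic_def by blast
  then show ?thesis by (rule isotopic_sym)
qed

lemma autotopism_row_or_col_nontrivial:
  assumes lat: "latin_square n L" and aut: "(a, b, c) \<in> autotopy_group n L"
    and nontriv: "(a, b, c) \<noteq> (id, id, id)"
  shows "a \<noteq> id \<or> b \<noteq> id"
proof (rule ccontr)
  assume "\<not> (a \<noteq> id \<or> b \<noteq> id)"
  then have ab: "a = id" "b = id" by simp_all
  have perm: "c permutes {..<n}" and eq: "\<And>r s. r < n \<Longrightarrow> s < n \<Longrightarrow> L r s = c (L r s)"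
    using aut by (auto simp: ab autotopy_group_def isotopism_maps_def)
  have "c x = x" for x
  proof (cases "x < n")
    case True
    then obtain s where "s < n" "L 0 s = x"
      using latin_square_row_bij[OF lat, of 0]
      by (metis bij_betw_def imageE lessThan_iff gr_zeroI less_nat_zero_code)
    then show ?thesis using eq True by force
  qed (use perm in \<open>simp add: permutes_not_in\<close>)
  then show False using nontriv ab by (simp add: fun_eq_iff)
qed

lemma parity_type_zero_if_prime_dvd_card_autotopy_group:
  assumes lat: "latin_square p L" and p: "prime p" "odd p"
    and dvd: "p dvd card (autotopy_group p L)"
  shows "fst (parity_type p L) = 0 \<or> snd (parity_type p L) = 0"
proof -
  interpret group "autotopy_grp p L" by (rule group_autotopy_grp)
  obtain x where x: "x \<in> autotopy_group p L" "x \<noteq> (id, id, id)"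
    "x [^]\<^bsub>autotopy_grp p L\<^esub> p = (id, id, id)"
    using subgroup_has_elem_pow_prime_eq_one[OF _ subgroup_self p(1)] dvd finite_autotopy_group
    by (auto simp: autotopy_grp_def)
  obtain a b c where abc: "x = (a, b, c)" by (cases x)
  have order: "a ^^ p = id" "b ^^ p = id" "c ^^ p = id"
    using x(3) by (simp_all add: abc autotopy_grp_pow)
  have aut: "(a, b, c) \<in> autotopy_group p L" using x(1) abc by simp
  moreover have "a \<noteq> id \<or> b \<noteq> id"
    using autotopism_row_or_col_nontrivial[OF lat aut] x(2) abc by simp
  ultimately show ?thesis
    using fst_parity_type_eq_0_if_autotopism[OF lat p aut order]
      snd_parity_type_eq_0_if_autotopism[OF lat p aut order]
    by (cases "a = id") simp_all
qed

lemma exists_autotopism_fixing_rows: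
  assumes lat: "latin_square p L" and p: "prime p"
    and dvd: "p^2 dvd card (autotopy_group p L)"
  obtains b c where "(id, b, c) \<in> autotopy_group p L" "b ^^ p = id" "c ^^ p = id" "b \<noteq> id"
proof -
  interpret group_hom "autotopy_grp p L" "perm_group {..<p}" fst
    by (rule group_hom_row_component)
  have "\<not> p^2 dvd order (perm_group {..<p})"
    using prime_square_not_dvd_fact[OF p] by (simp add: order_perm_group)
  then obtain x where x: "x \<in> autotopy_group p L" "fst x = id" "x \<noteq> (id, id, id)"
    "x [^]\<^bsub>autotopy_grp p L\<^esub> p = (id, id, id)"
    using kernel_has_elem_pow_prime_eq_one[OF _ p] dvd finite_autotopy_group
    by (auto simp: autotopy_grp_def perm_group_def order_def)
  obtain b c where abc: "x = (id, b, c)" using x(2) by (cases x) auto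
  have "b ^^ p = id" "c ^^ p = id" using x(4) by (simp_all add: abc autotopy_grp_pow)
  moreover have "b \<noteq> id"
    using autotopism_row_or_col_nontrivial[OF lat, of id b c] x(1,3) by (simp add: abc)
  ultimately show ?thesis using that x(1) abc by blast
qed

lemma snd_parity_type_eq_0_and_isotopic_cayley_Zn:
  assumes lat: "latin_square p L" and p: "prime p" "odd p"
    and dvd: "p^2 dvd card (autotopy_group p L)"
  shows "snd (parity_type p L) = 0 \<and> isotopic p L (cayley_Zn p)"
proof -
  obtain b c where aut: "(id, b, c) \<in> autotopy_group p L"
    and order: "b ^^ p = id" "c ^^ p = id" and b: "b \<noteq> id"
    using exists_autotopism_fixing_rows[OF lat p(1) dvd] .
  show ?thesis
    using snd_parity_type_eq_0_if_autotopism[OF lat p aut id_funpow order b]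
      isotopic_cayley_Zn_if_autotopism[OF lat p(1) aut order b] by simp
qed

theorem corollary4p1:
  fixes p k m :: nat and L :: "nat \<Rightarrow> nat \<Rightarrow> nat"
  assumes "prime p" and "p > 2"
    and "latin_square p L"
    and "parity_type p L = (k, m)"
  shows "((k \<noteq> 0 \<or> m \<noteq> 0) \<longrightarrow> \<not> p^2 dvd card (autotopy_group p L))
       \<and> ((k \<noteq> 0 \<and> m \<noteq> 0) \<longrightarrow> \<not> p dvd card (autotopy_group p L))
       \<and> ((k = 0 \<and> m = 0 \<and> \<not> isotopic p L (cayley_Zn p))
            \<longrightarrow> \<not> p^2 dvd card (autotopy_group p L))"
proof -
  note p = \<open>prime p\<close> prime_odd_nat[OF \<open>prime p\<close> \<open>p > 2\<close>]
  note lat = \<open>latin_square p L\<close>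
  have "k = 0 \<or> m = 0" if "p dvd card (autotopy_group p L)"
    using parity_type_zero_if_prime_dvd_card_autotopy_group[OF lat p that] assms(4) by simp
  moreover have "k = 0 \<and> m = 0 \<and> isotopic p L (cayley_Zn p)"
    if "p^2 dvd card (autotopy_group p L)"
    using snd_parity_type_eq_0_and_isotopic_cayley_Zn[OF lat p that]
      snd_parity_type_eq_0_and_isotopic_cayley_Zn[OF latin_square_transposed[OF lat] p]
      that assms(4)
    by (simp add: card_autotopy_group_transposed parity_type_transposed)
  ultimately show ?thesis by blast
qed

end
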